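(* Let $\mathcal{D}$ be any basic action theory whose initial theory includes the axiom $$(\star)\quad [\forall \vec x\, \exists \iota \textstyle\bigwedge_i f_i(\iota) = x_i] \land [\forall \iota,\iota'.\ \textstyle\bigwedge_i f_i(\iota) = f_i(\iota') \supset \iota = \iota'],$$ let $\phi$ be any situation-suppressed $\mathcal{L}$-formula, and let $\alpha$ be any sequence of ground action terms. Then $$\frac{1}{\gamma}\sum_{\{s':\phi[s']\}} p(s',do(\alpha,S_0)) \quad\text{and}\quad \frac{1}{\gamma'}\sum_{\vec x}\langle \iota.\ \textstyle\bigwedge_i f_i(\iota) = x_i \land \phi[do(\alpha,\iota)] \to p(do(\alpha,\iota),do(\alpha,S_0))\rangle$$ define the same number (in every $\mathbb{R}$-interpretation satisfying $\mathcal{D}$), where $\gamma,\gamma'$ are the respective numerators with $\phi$ replaced by $\mathit{true}$.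
   Context: Situation calculus: a many-sorted language $\mathcal{L}$ with sorts action, situation, object; $do(a,s)$ is the successor of $s$ under action $a$, and for $\alpha=[a_1,\ldots,a_k]$, $do(\alpha,s)$ is $do(a_k,do(\ldots,do(a_1,s)\ldots))$; $S_0$ is the actual initial situation; $\mathit{Init}(s) \doteq \neg\exists a,s'.\, s = do(a,s')$; $\iota,\iota'$ range over initial situations. $f_1,\ldots,f_n$ are all the fluents, each taking only a situation argument and values in a finite set; $\vec x$ ranges over value vectors, $i$ over $1..n$. $\phi[s]$ restores situation argument $s$ in $\phi$. $\langle z.\ \psi \to t\rangle = u$ abbreviates $[(\exists z\psi)\supset \forall z(\psi \supset u = t)] \land [(\neg\exists z\psi) \supset u = 0]$. Distinguished symbols: $\mathit{Poss}(a,s)$, $p(s',s)$ (weight of $s'$ when in $s$), $l(a,s)$ (likelihood). A basic action theory consists of $\mathcal{D}_0$ containing (P1) $\forall \iota,s.\ p(s,\iota) \ge 0 \land (p(s,\iota) > 0 \supset \mathit{Init}(s))$; precondition axioms; successor state axioms including (P2) $p(s',do(a,s)) = u \equiv \exists s''[s' = do(a,s'') \land \mathit{Poss}(a,s'') \land u = p(s'',s)\times l(a,s'')] \lor \neg\exists s''[s'=do(a,s'')\land \mathit{Poss}(a,s'')] \land u = 0$; likelihood axioms; foundational axioms. Entailment is over $\mathbb{R}$-interpretations. Finite sums are abbreviations for second-order formulas. *)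

theory Defs
  imports Complex_Main "HOL-Library.FuncSet"
begin

text \<open>Semantic rendering of an R-interpretation of the situation calculus.
  Fluents are f 0, ..., f (n-1) (the paper's f_1..f_n), fluent i has values in
  the finite set D i.\<close>

definition Init :: "('a \<Rightarrow> 's \<Rightarrow> 's) \<Rightarrow> 's \<Rightarrow> bool" where
  "Init do s \<longleftrightarrow> \<not> (\<exists>a s'. s = do a s')"

definition doSeq :: "('a \<Rightarrow> 's \<Rightarrow> 's) \<Rightarrow> 'a list \<Rightarrow> 's \<Rightarrow> 's" where
  "doSeq do as s = foldl (\<lambda>s' a. do a s') s as"

text \<open>The vector of fluent values at situation s (a situation-suppressed formula
  phi, with situation s restored, is a property of this vector).\<close>
definition fvec :: "nat \<Rightarrow> (nat \<Rightarrow> 's \<Rightarrow> 'v) \<Rightarrow> 's \<Rightarrow> (nat \<Rightarrow> 'v)" where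
  "fvec n f s = restrict (\<lambda>i. f i s) {..<n}"

definition foundational :: "('a \<Rightarrow> 's \<Rightarrow> 's) \<Rightarrow> 's \<Rightarrow> bool" where
  "foundational do S0 \<longleftrightarrow>
     (\<forall>a1 a2 s1 s2. do a1 s1 = do a2 s2 \<longrightarrow> a1 = a2 \<and> s1 = s2) \<and>
     (\<forall>P. (\<forall>s. Init do s \<longrightarrow> P s) \<and> (\<forall>a s. P s \<longrightarrow> P (do a s)) \<longrightarrow> (\<forall>s. P s)) \<and>
     Init do S0"

definition axP1 :: "('a \<Rightarrow> 's \<Rightarrow> 's) \<Rightarrow> ('s \<Rightarrow> 's \<Rightarrow> real) \<Rightarrow> bool" where
  "axP1 do p \<longleftrightarrow> (\<forall>\<iota> s. Init do \<iota> \<longrightarrow> p s \<iota> \<ge> 0 \<and> (p s \<iota> > 0 \<longrightarrow> Init do s))"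

definition axP2 :: "('a \<Rightarrow> 's \<Rightarrow> 's) \<Rightarrow> ('a \<Rightarrow> 's \<Rightarrow> bool) \<Rightarrow> ('s \<Rightarrow> 's \<Rightarrow> real)
    \<Rightarrow> ('a \<Rightarrow> 's \<Rightarrow> real) \<Rightarrow> bool" where
  "axP2 do Poss p l \<longleftrightarrow> (\<forall>s' a s u. p s' (do a s) = u \<longleftrightarrow>
     ((\<exists>s''. s' = do a s'' \<and> Poss a s'' \<and> u = p s'' s * l a s'') \<or>
      (\<not> (\<exists>s''. s' = do a s'' \<and> Poss a s'') \<and> u = 0)))"

text \<open>A model of a basic action theory: foundational axioms, (P1), (P2),
  fluents with values in finite sets, and precondition, successor state and
  likelihood axioms whose right-hand sides are uniform in s (hence depend on s
  only through the fluent values at s).\<close>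
definition BAT_model :: "('a \<Rightarrow> 's \<Rightarrow> 's) \<Rightarrow> 's \<Rightarrow> ('a \<Rightarrow> 's \<Rightarrow> bool) \<Rightarrow> ('s \<Rightarrow> 's \<Rightarrow> real)
    \<Rightarrow> ('a \<Rightarrow> 's \<Rightarrow> real) \<Rightarrow> nat \<Rightarrow> (nat \<Rightarrow> 's \<Rightarrow> 'v) \<Rightarrow> (nat \<Rightarrow> 'v set) \<Rightarrow> bool" where
  "BAT_model do S0 Poss p l n f D \<longleftrightarrow>
     foundational do S0 \<and> axP1 do p \<and> axP2 do Poss p l \<and>
     (\<forall>i<n. finite (D i) \<and> (\<forall>s. f i s \<in> D i)) \<and>
     (\<exists>Pi. \<forall>a s. Poss a s = Pi a (fvec n f s)) \<and>
     (\<exists>F. \<forall>i<n. \<forall>a s. f i (do a s) = F i a (fvec n f s)) \<and>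
     (\<exists>L. \<forall>a s. l a s = L a (fvec n f s))"

definition axStar :: "('a \<Rightarrow> 's \<Rightarrow> 's) \<Rightarrow> nat \<Rightarrow> (nat \<Rightarrow> 's \<Rightarrow> 'v) \<Rightarrow> (nat \<Rightarrow> 'v set) \<Rightarrow> bool" where
  "axStar do n f D \<longleftrightarrow>
     (\<forall>x \<in> PiE {..<n} D. \<exists>\<iota>. Init do \<iota> \<and> (\<forall>i<n. f i \<iota> = x i)) \<and>
     (\<forall>\<iota> \<iota>'. Init do \<iota> \<and> Init do \<iota>' \<and> (\<forall>i<n. f i \<iota> = f i \<iota>') \<longrightarrow> \<iota> = \<iota>')"

definition cond_term :: "('z \<Rightarrow> bool) \<Rightarrow> ('z \<Rightarrow> real) \<Rightarrow> real \<Rightarrow> bool" where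
  "cond_term \<psi> t u \<longleftrightarrow>
     ((\<exists>z. \<psi> z) \<longrightarrow> (\<forall>z. \<psi> z \<longrightarrow> u = t z)) \<and> ((\<not> (\<exists>z. \<psi> z)) \<longrightarrow> u = 0)"

text \<open>Sum over {s' : phi[s']} of p(s', S): the finite sum over those s' satisfying
  phi with nonzero weight.\<close>
definition sitSum :: "('s \<Rightarrow> 's \<Rightarrow> real) \<Rightarrow> ('s \<Rightarrow> bool) \<Rightarrow> 's \<Rightarrow> real" where
  "sitSum p P S = (\<Sum>s' \<in> {s'. P s' \<and> p s' S \<noteq> 0}. p s' S)"

definition vecTerm :: "('a \<Rightarrow> 's \<Rightarrow> 's) \<Rightarrow> 's \<Rightarrow> ('s \<Rightarrow> 's \<Rightarrow> real) \<Rightarrow> nat \<Rightarrow> (nat \<Rightarrow> 's \<Rightarrow> 'v)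
    \<Rightarrow> ((nat \<Rightarrow> 'v) \<Rightarrow> bool) \<Rightarrow> 'a list \<Rightarrow> (nat \<Rightarrow> 'v) \<Rightarrow> real \<Rightarrow> bool" where
  "vecTerm do S0 p n f \<phi> \<alpha> x u \<longleftrightarrow>
     cond_term (\<lambda>\<iota>. Init do \<iota> \<and> (\<forall>i<n. f i \<iota> = x i) \<and> \<phi> (fvec n f (doSeq do \<alpha> \<iota>)))
               (\<lambda>\<iota>. p (doSeq do \<alpha> \<iota>) (doSeq do \<alpha> S0)) u"

end

theory Submission
  imports Defs
begin

text \<open>By (P1) and (P2), p(s', do(\<alpha>, S0)) can only be nonzero at situations
  s' = do(\<alpha>, \<iota>) with \<iota> initial, and do(\<alpha>, -) is injective by the foundational
  axioms. Axiom (\<star>) makes the fluent vector a bijection between initial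
  situations and value vectors, under which the \<iota>-term of the vector sum at x is
  exactly the weight of do(\<alpha>, \<iota>) for the unique \<iota> with fluent values x. Hence each
  sum over situations equals the corresponding sum over value vectors.\<close>

lemma doSeq_snoc: "doSeq do (as @ [a]) s = do a (doSeq do as s)"
  by (simp add: doSeq_def)

lemma doSeq_inj:
  assumes "\<forall>a1 a2 s1 s2. do a1 s1 = do a2 s2 \<longrightarrow> a1 = a2 \<and> s1 = s2"
  shows "inj (doSeq do as)"
proof (induction as rule: rev_induct)
  case Nil
  show ?case by (simp add: doSeq_def)
next
  case (snoc a as)
  show ?case
  proof (rule injI)
    fix s1 s2
    assume "doSeq do (as @ [a]) s1 = doSeq do (as @ [a]) s2"
    then have "do a (doSeq do as s1) = do a (doSeq do as s2)" by (simp add: doSeq_snoc)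
    with assms have "doSeq do as s1 = doSeq do as s2" by blast
    with snoc.IH show "s1 = s2" by (simp add: inj_eq)
  qed
qed

lemma p_doSeq_nonzero_imp_Init:
  assumes P1: "axP1 do p" and P2: "axP2 do Poss p l" and S: "Init do S"
    and "p s' (doSeq do as S) \<noteq> 0"
  shows "\<exists>\<iota>. Init do \<iota> \<and> s' = doSeq do as \<iota>"
  using assms(4)
proof (induction as arbitrary: s' rule: rev_induct)
  case Nil
  then have "Init do s'" using P1 S by (force simp: axP1_def doSeq_def)
  then show ?case by (auto simp: doSeq_def)
next
  case (snoc a as)
  let ?T = "doSeq do as S"
  have "p s' (do a ?T) \<noteq> 0" using snoc.prems by (simp add: doSeq_snoc)
  moreover have "(\<exists>s''. s' = do a s'' \<and> Poss a s'' \<and> p s' (do a ?T) = p s'' ?T * l a s'') \<or>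
      (\<not> (\<exists>s''. s' = do a s'' \<and> Poss a s'') \<and> p s' (do a ?T) = 0)"
    using P2 unfolding axP2_def by blast
  ultimately obtain s'' where "s' = do a s''" "p s'' ?T \<noteq> 0" by force
  with snoc.IH show ?case by (auto simp: doSeq_snoc)
qed

lemma sitSum_eq_sum_Init:
  assumes P1: "axP1 do p" and P2: "axP2 do Poss p l" and S: "Init do S"
    and inj_do: "\<forall>a1 a2 s1 s2. do a1 s1 = do a2 s2 \<longrightarrow> a1 = a2 \<and> s1 = s2"
    and fin: "finite {\<iota>. Init do \<iota>}"
  shows "sitSum p P (doSeq do as S) =
    (\<Sum>\<iota> | Init do \<iota>. if P (doSeq do as \<iota>) then p (doSeq do as \<iota>) (doSeq do as S) else 0)"
proof -
  let ?g = "doSeq do as" and ?T = "doSeq do as S"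
  let ?C = "\<lambda>\<iota>. P (?g \<iota>) \<and> p (?g \<iota>) ?T \<noteq> 0"
  have support: "{s'. P s' \<and> p s' ?T \<noteq> 0} = ?g ` {\<iota>. Init do \<iota> \<and> ?C \<iota>}"
    using p_doSeq_nonzero_imp_Init[OF P1 P2 S] by blast
  have "sitSum p P ?T = (\<Sum>\<iota> | Init do \<iota> \<and> ?C \<iota>. p (?g \<iota>) ?T)"
    unfolding sitSum_def support
    using doSeq_inj[OF inj_do] by (simp add: sum.reindex inj_on_def inj_def)
  also have "\<dots> = (\<Sum>\<iota> | Init do \<iota>. if ?C \<iota> then p (?g \<iota>) ?T else 0)"
    using sum.inter_filter[OF fin] by simp
  also have "\<dots> = (\<Sum>\<iota> | Init do \<iota>. if P (?g \<iota>) then p (?g \<iota>) ?T else 0)"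
    by (rule sum.cong) auto
  finally show ?thesis .
qed

lemma fvec_eq_iff: "fvec n f s = fvec n f s' \<longleftrightarrow> (\<forall>i<n. f i s = f i s')"
  by (auto simp: fvec_def fun_eq_iff)

lemma bij_betw_fvec_Init:
  assumes "axStar do n f D" and "\<forall>i<n. \<forall>s. f i s \<in> D i"
  shows "bij_betw (fvec n f) {\<iota>. Init do \<iota>} (PiE {..<n} D)"
proof (rule bij_betwI')
  show "fvec n f \<iota> = fvec n f \<iota>' \<longleftrightarrow> \<iota> = \<iota>'"
    if "\<iota> \<in> {\<iota>. Init do \<iota>}" "\<iota>' \<in> {\<iota>. Init do \<iota>}" for \<iota> \<iota>'
    using assms(1) that unfolding axStar_def fvec_eq_iff by blast
  show "fvec n f \<iota> \<in> PiE {..<n} D" for \<iota>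
    unfolding fvec_def restrict_PiE_iff using assms(2) by blast
  show "\<exists>\<iota>\<in>{\<iota>. Init do \<iota>}. x = fvec n f \<iota>" if x: "x \<in> PiE {..<n} D" for x
  proof -
    obtain \<iota> where "Init do \<iota>" "\<forall>i<n. f i \<iota> = x i"
      using assms(1) x unfolding axStar_def by blast
    moreover have "x = fvec n f \<iota>"
      using x calculation(2) by (auto simp: fvec_def PiE_def extensional_def)
    ultimately show ?thesis by blast
  qed
qed

lemma vecTerm_fvec_iff:
  assumes inj: "inj_on (fvec n f) {\<iota>. Init do \<iota>}" and \<iota>: "Init do \<iota>"
  shows "vecTerm do S0 p n f \<phi> \<alpha> (fvec n f \<iota>) u \<longleftrightarrow>
    u = (if \<phi> (fvec n f (doSeq do \<alpha> \<iota>)) then p (doSeq do \<alpha> \<iota>) (doSeq do \<alpha> S0) else 0)"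
proof -
  have "(\<forall>i<n. f i \<iota>' = fvec n f \<iota> i) \<longleftrightarrow> fvec n f \<iota>' = fvec n f \<iota>" for \<iota>'
    unfolding fvec_eq_iff by (simp add: fvec_def)
  then have only_\<iota>: "Init do \<iota>' \<and> (\<forall>i<n. f i \<iota>' = fvec n f \<iota> i) \<longleftrightarrow> \<iota>' = \<iota>" for \<iota>'
    using inj_on_eq_iff[OF inj, of \<iota>' \<iota>] \<iota> by auto
  show ?thesis
    unfolding vecTerm_def cond_term_def conj_assoc[symmetric] only_\<iota> by auto
qed

lemma sum_vecTerm_eq_sum_Init:
  assumes "axStar do n f D" and "\<forall>i<n. \<forall>s. f i s \<in> D i"
    and U: "\<forall>x \<in> PiE {..<n} D. vecTerm do S0 p n f \<phi> \<alpha> x (U x)"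
  shows "(\<Sum>x \<in> PiE {..<n} D. U x) =
    (\<Sum>\<iota> | Init do \<iota>. if \<phi> (fvec n f (doSeq do \<alpha> \<iota>))
                     then p (doSeq do \<alpha> \<iota>) (doSeq do \<alpha> S0) else 0)"
proof -
  have bij: "bij_betw (fvec n f) {\<iota>. Init do \<iota>} (PiE {..<n} D)"
    using bij_betw_fvec_Init[OF assms(1,2)] .
  have "(\<Sum>x \<in> PiE {..<n} D. U x) = (\<Sum>\<iota> | Init do \<iota>. U (fvec n f \<iota>))"
    by (rule sum.reindex_bij_betw[OF bij, symmetric])
  also have "\<dots> = (\<Sum>\<iota> | Init do \<iota>. if \<phi> (fvec n f (doSeq do \<alpha> \<iota>))
                     then p (doSeq do \<alpha> \<iota>) (doSeq do \<alpha> S0) else 0)"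
  proof (rule sum.cong)
    fix \<iota> assume \<iota>: "\<iota> \<in> {\<iota>. Init do \<iota>}"
    then have "vecTerm do S0 p n f \<phi> \<alpha> (fvec n f \<iota>) (U (fvec n f \<iota>))"
      using U bij_betwE[OF bij] by blast
    then show "U (fvec n f \<iota>) = (if \<phi> (fvec n f (doSeq do \<alpha> \<iota>))
                     then p (doSeq do \<alpha> \<iota>) (doSeq do \<alpha> S0) else 0)"
      using vecTerm_fvec_iff[OF bij_betw_imp_inj_on[OF bij]] \<iota> by simp
  qed simp
  finally show ?thesis .
qed

lemma vecTerm_exists:
  assumes "axStar do n f D" and "\<forall>i<n. \<forall>s. f i s \<in> D i"
  shows "\<exists>U. \<forall>x \<in> PiE {..<n} D. vecTerm do S0 p n f \<phi> \<alpha> x (U x)"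
proof -
  have bij: "bij_betw (fvec n f) {\<iota>. Init do \<iota>} (PiE {..<n} D)"
    using bij_betw_fvec_Init[OF assms] .
  define \<iota> where "\<iota> x = inv_into {\<iota>. Init do \<iota>} (fvec n f) x" for x
  define U where "U x = (if \<phi> (fvec n f (doSeq do \<alpha> (\<iota> x)))
                          then p (doSeq do \<alpha> (\<iota> x)) (doSeq do \<alpha> S0) else 0)" for x
  have "vecTerm do S0 p n f \<phi> \<alpha> x (U x)" if x: "x \<in> PiE {..<n} D" for x
  proof -
    have x_image: "x \<in> fvec n f ` {\<iota>. Init do \<iota>}"
      using bij x by (simp add: bij_betw_def)
    have "Init do (\<iota> x)"
      using inv_into_into[OF x_image] unfolding \<iota>_def by simp
    moreover have "fvec n f (\<iota> x) = x"
      using f_inv_into_f[OF x_image] unfolding \<iota>_def .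
    ultimately show ?thesis
      using vecTerm_fvec_iff[OF bij_betw_imp_inj_on[OF bij], of "\<iota> x" S0 p \<phi> \<alpha>] unfolding U_def by simp
  qed
  then show ?thesis by blast
qed

theorem sitSum_eq_sum_vecTerm:
  assumes "BAT_model do S0 Poss p l n f D" and "axStar do n f D"
    and "\<forall>x \<in> PiE {..<n} D. vecTerm do S0 p n f \<phi> \<alpha> x (U x)"
  shows "sitSum p (\<lambda>s'. \<phi> (fvec n f s')) (doSeq do \<alpha> S0) = (\<Sum>x \<in> PiE {..<n} D. U x)"
proof -
  have fluents: "\<forall>i<n. finite (D i) \<and> (\<forall>s. f i s \<in> D i)"
    and P1: "axP1 do p" and P2: "axP2 do Poss p l"
    and inj_do: "\<forall>a1 a2 s1 s2. do a1 s1 = do a2 s2 \<longrightarrow> a1 = a2 \<and> s1 = s2"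
    and S0: "Init do S0"
    using assms(1) unfolding BAT_model_def foundational_def by auto
  have ranges: "\<forall>i<n. \<forall>s. f i s \<in> D i"
    using fluents by blast
  have "finite (PiE {..<n} D)"
    using fluents by (intro finite_PiE) auto
  then have "finite {\<iota>. Init do \<iota>}"
    using bij_betw_finite[OF bij_betw_fvec_Init[OF assms(2) ranges]] by simp
  then have "sitSum p (\<lambda>s'. \<phi> (fvec n f s')) (doSeq do \<alpha> S0) =
      (\<Sum>\<iota> | Init do \<iota>. if \<phi> (fvec n f (doSeq do \<alpha> \<iota>))
                       then p (doSeq do \<alpha> \<iota>) (doSeq do \<alpha> S0) else 0)"
    by (rule sitSum_eq_sum_Init[OF P1 P2 S0 inj_do])
  also have "\<dots> = (\<Sum>x \<in> PiE {..<n} D. U x)"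
    by (rule sum_vecTerm_eq_sum_Init[OF assms(2) ranges assms(3), symmetric])
  finally show ?thesis .
qed

theorem mainTheorem11:
  fixes do :: "'a \<Rightarrow> 's \<Rightarrow> 's" and S0 :: 's and Poss :: "'a \<Rightarrow> 's \<Rightarrow> bool"
    and p :: "'s \<Rightarrow> 's \<Rightarrow> real" and l :: "'a \<Rightarrow> 's \<Rightarrow> real"
    and n :: nat and f :: "nat \<Rightarrow> 's \<Rightarrow> 'v" and D :: "nat \<Rightarrow> 'v set"
    and \<phi> :: "(nat \<Rightarrow> 'v) \<Rightarrow> bool" and \<alpha> :: "'a list"
  assumes "BAT_model do S0 Poss p l n f D"
    and "axStar do n f D"
  shows "(\<exists>U. \<forall>x \<in> PiE {..<n} D. vecTerm do S0 p n f \<phi> \<alpha> x (U x)) \<and>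
         (\<exists>U'. \<forall>x \<in> PiE {..<n} D. vecTerm do S0 p n f (\<lambda>_. True) \<alpha> x (U' x)) \<and>
         (\<forall>U U'. (\<forall>x \<in> PiE {..<n} D. vecTerm do S0 p n f \<phi> \<alpha> x (U x)) \<and>
                 (\<forall>x \<in> PiE {..<n} D. vecTerm do S0 p n f (\<lambda>_. True) \<alpha> x (U' x)) \<longrightarrow>
            sitSum p (\<lambda>s'. \<phi> (fvec n f s')) (doSeq do \<alpha> S0)
              / sitSum p (\<lambda>s'. True) (doSeq do \<alpha> S0)
            = (\<Sum>x \<in> PiE {..<n} D. U x) / (\<Sum>x \<in> PiE {..<n} D. U' x))"
proof -
  have ranges: "\<forall>i<n. \<forall>s. f i s \<in> D i"
    using assms(1) unfolding BAT_model_def by auto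
  show ?thesis
  proof (intro conjI allI impI vecTerm_exists[OF assms(2) ranges])
    fix U U'
    assume vecTerms: "(\<forall>x \<in> PiE {..<n} D. vecTerm do S0 p n f \<phi> \<alpha> x (U x)) \<and>
            (\<forall>x \<in> PiE {..<n} D. vecTerm do S0 p n f (\<lambda>_. True) \<alpha> x (U' x))"
    have "sitSum p (\<lambda>s'. \<phi> (fvec n f s')) (doSeq do \<alpha> S0) = (\<Sum>x \<in> PiE {..<n} D. U x)"
      by (rule sitSum_eq_sum_vecTerm[OF assms conjunct1[OF vecTerms]])
    moreover have "sitSum p (\<lambda>s'. True) (doSeq do \<alpha> S0) = (\<Sum>x \<in> PiE {..<n} D. U' x)"
      by (rule sitSum_eq_sum_vecTerm[OF assms conjunct2[OF vecTerms]])
    ultimately show "sitSum p (\<lambda>s'. \<phi> (fvec n f s')) (doSeq do \<alpha> S0)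
                / sitSum p (\<lambda>s'. True) (doSeq do \<alpha> S0)
              = (\<Sum>x \<in> PiE {..<n} D. U x) / (\<Sum>x \<in> PiE {..<n} D. U' x)"
      by (simp only:)
  qed
qed

end
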